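(* Let $n$ be a large positive integer, let $\sigma>0$ and $\delta>0$ be constants, let $d=\delta\left(\frac{\log n}{\log\log n}\right)^{1/3}$ (a positive integer), and let $a,b$ be integers with $0\le a<b\le \frac12 L_n\!\left(\frac13,\sigma\right)$ and $\gcd(a,b)=1$. Define $\varphi=\varphi_{a,b}:\mathbb{Z}^d\to\mathbb{Z}$ by $$\varphi\big((v_0,\ldots,v_{d-1})\big)=\sum_{i=0}^{d-1}v_i\,a^{d-i-1}b^i .$$ Then there exists a set $S\subseteq \mathbb{I}\!\left(4L_n\!\left(\frac13,\sigma\right)\right)^d$ such that $\varphi$ restricted to $S$ is a bijection from $S$ onto $\mathbb{I}(b^{d-1})$.
   Context: For $x,\alpha,c\in\mathbb{R}$, $L_x(\alpha,c)=\exp\!\big(c(\log x)^{\alpha}(\log\log x)^{1-\alpha}\big)$. For $L>0$, $\mathbb{I}(L)=\left[-\frac12 L,\frac12 L\right)\cap\mathbb{Z}$ denotes the zero-centred half-open integer interval of length $L$. *)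

theory Defs
  imports Complex_Main
begin

definition Lfun :: "real \<Rightarrow> real \<Rightarrow> real \<Rightarrow> real" where
  "Lfun x \<alpha> c = exp (c * (ln x) powr \<alpha> * (ln (ln x)) powr (1 - \<alpha>))"

definition Ival :: "real \<Rightarrow> int set" where
  "Ival L = {k::int. - L / 2 \<le> real_of_int k \<and> real_of_int k < L / 2}"

text \<open>Vectors in Z^d are integer lists of length d; coordinates v_0..v_{d-1} are v!0..v!(d-1).\<close>
definition phi :: "int \<Rightarrow> int \<Rightarrow> nat \<Rightarrow> int list \<Rightarrow> int" where
  "phi a b d v = (\<Sum>i<d. v ! i * a ^ (d - i - 1) * b ^ i)"

end

theory Submission
  imports Defs
begin

text \<open>Every t with 2|t| \<le> b^d is hit by a vector with entries bounded by b, built one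
  coordinate at a time: write t = a P + b^(d-1) x, where P is the residue of t a^(-1) modulo
  b^(d-1) closest to 0 (a is invertible there since gcd a b = 1). Then P is represented in one
  dimension less by induction, and |x| \<le> b because 2|t| \<le> b^d and 2|a P| \<le> a b^(d-1).
  Choosing one preimage per target gives the set S.\<close>

lemma phi_append:
  assumes "length v = d"
  shows "phi a b (Suc d) (v @ [x]) = a * phi a b d v + x * b ^ d"
proof -
  have "phi a b (Suc d) (v @ [x]) = (\<Sum>i<d. v ! i * a ^ (d - i) * b ^ i) + x * b ^ d"
    unfolding phi_def using assms by (simp add: nth_append)
  also have "(\<Sum>i<d. v ! i * a ^ (d - i) * b ^ i) = (\<Sum>i<d. a * (v ! i * a ^ (d - i - 1) * b ^ i))"
    by (rule sum.cong) (simp_all add: Suc_diff_Suc power_Suc[symmetric])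
  also have "\<dots> = a * phi a b d v"
    unfolding phi_def by (simp add: sum_distrib_left)
  finally show ?thesis .
qed

lemma exists_centered_residue:
  fixes B c :: int
  assumes "B \<ge> 1"
  obtains P where "B dvd P - c" and "2 * \<bar>P\<bar> \<le> B"
proof -
  define r where "r = c mod B"
  have r: "0 \<le> r" "r < B" "B dvd r - c"
    using assms by (auto simp: r_def mod_eq_dvd_iff[symmetric])
  show ?thesis
  proof (cases "2 * r \<le> B")
    case True
    then show ?thesis using r by (intro that[of r]) auto
  next
    case False
    have "B dvd (r - c) - B" using r(3) by simp
    then show ?thesis using r False by (intro that[of "r - B"]) (auto simp: algebra_simps)
  qed
qed

lemma phi_preimage_with_small_entries:
  fixes a b t :: int
  assumes "0 \<le> a" "a < b" "gcd a b = 1" and "2 * \<bar>t\<bar> \<le> b ^ Suc m"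
  shows "\<exists>v. length v = Suc m \<and> (\<forall>x\<in>set v. \<bar>x\<bar> \<le> b) \<and> phi a b (Suc m) v = t"
  using assms(4)
proof (induction m arbitrary: t)
  case 0
  then show ?case by (intro exI[of _ "[t]"]) (simp add: phi_def)
next
  case (Suc m)
  define B where "B = b ^ Suc m"
  have B1: "B \<ge> 1" unfolding B_def using assms(1,2) by (simp del: power_Suc)
  have "coprime a b" using assms(3) by (simp add: coprime_iff_gcd_eq_1)
  then have "coprime a B" unfolding B_def by simp
  then obtain u w where uw: "u * a + w * B = 1" using bezout_int[of a B] by auto
  obtain P where P: "B dvd P - t * u" "2 * \<bar>P\<bar> \<le> B"
    using exists_centered_residue[OF B1] .
  have "t - a * P = t * (u * a + w * B) - a * P" using uw by simp
  also have "\<dots> = B * (t * w) - a * (P - t * u)" by (simp add: algebra_simps)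
  finally have "B dvd t - a * P" using P(1) by (metis dvd_diff dvd_mult dvd_triv_left)
  then obtain x where x: "t - a * P = B * x" by (auto simp: dvd_def)
  obtain v where v: "length v = Suc m" "\<forall>y\<in>set v. \<bar>y\<bar> \<le> b" "phi a b (Suc m) v = P"
    using Suc.IH P(2) unfolding B_def by blast
  have "2 * \<bar>a * P\<bar> \<le> a * B" using P(2) assms(1)
    by (simp add: abs_mult mult_left_mono mult.left_commute)
  moreover have "2 * \<bar>t\<bar> \<le> b * B" using Suc.prems unfolding B_def by simp
  ultimately have "2 * \<bar>B * x\<bar> \<le> b * B + a * B" using x by linarith
  also have "\<dots> \<le> 2 * b * B" using assms(2) B1 by (simp add: mult_right_mono)
  finally have "B * (2 * \<bar>x\<bar>) \<le> B * (2 * b)" using B1 by (simp add: abs_mult algebra_simps)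
  then have "\<bar>x\<bar> \<le> b" using B1 by simp
  moreover have "phi a b (Suc (Suc m)) (v @ [x]) = t"
    using phi_append[OF v(1)] v(3) x unfolding B_def by (simp add: algebra_simps)
  ultimately show ?case using v by (intro exI[of _ "v @ [x]"]) auto
qed

lemma exists_bij_betw_subset:
  assumes "T \<subseteq> f ` A"
  shows "\<exists>S \<subseteq> A. bij_betw f S T"
proof (intro exI conjI)
  show "inv_into A f ` T \<subseteq> A" using assms by (auto intro: inv_into_into)
  have "inj_on (f \<circ> inv_into A f) T"
    using assms by (auto intro!: inj_onI simp: f_inv_into_f subset_iff)
  then have "inj_on f (inv_into A f ` T)" by (rule inj_on_imageI)
  moreover have "f ` inv_into A f ` T = T"
    using image_inv_into_cancel[OF refl assms] .
  ultimately show "bij_betw f (inv_into A f ` T) T"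
    unfolding bij_betw_def ..
qed

lemma abs_le_if_in_Ival: "k \<in> Ival L \<Longrightarrow> 2 * \<bar>real_of_int k\<bar> \<le> L"
  unfolding Ival_def by auto

lemma in_Ival_if_abs_less: "2 * \<bar>real_of_int k\<bar> < L \<Longrightarrow> k \<in> Ival L"
  unfolding Ival_def by auto

theorem lemma5p6:
  fixes \<sigma> \<delta> :: real
  assumes "\<sigma> > 0" and "\<delta> > 0"
  shows "\<exists>N::nat. \<forall>n::nat \<ge> N. \<forall>d::nat. \<forall>a b :: int.
     d > 0 \<longrightarrow>
     real d = \<delta> * (ln (real n) / ln (ln (real n))) powr (1/3) \<longrightarrow>
     0 \<le> a \<longrightarrow> a < b \<longrightarrow> real_of_int b \<le> Lfun (real n) (1/3) \<sigma> / 2 \<longrightarrow>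
     gcd a b = 1 \<longrightarrow>
     (\<exists>S. S \<subseteq> {v. length v = d \<and> (\<forall>x\<in>set v. x \<in> Ival (4 * Lfun (real n) (1/3) \<sigma>))}
          \<and> bij_betw (phi a b d) S (Ival (real_of_int (b ^ (d - 1)))))"
proof (intro exI[of _ 0] allI impI)
  fix n d :: nat and a b :: int
  assume "d > 0" and ab: "0 \<le> a" "a < b" and b_le: "real_of_int b \<le> Lfun (real n) (1/3) \<sigma> / 2"
    and "gcd a b = 1"
  then obtain m where m: "d = Suc m" by (metis gr0_implies_Suc)
  let ?A = "{v. length v = d \<and> (\<forall>x\<in>set v. x \<in> Ival (4 * Lfun (real n) (1/3) \<sigma>))}"
  have "Lfun (real n) (1/3) \<sigma> > 0" unfolding Lfun_def by simp
  then have small_in_A: "\<bar>x\<bar> \<le> b \<Longrightarrow> x \<in> Ival (4 * Lfun (real n) (1/3) \<sigma>)" for x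
    using b_le by (intro in_Ival_if_abs_less) linarith
  have "Ival (real_of_int (b ^ (d - 1))) \<subseteq> phi a b d ` ?A"
  proof
    fix t assume "t \<in> Ival (real_of_int (b ^ (d - 1)))"
    then have "2 * \<bar>real_of_int t\<bar> \<le> real_of_int (b ^ m)"
      using abs_le_if_in_Ival m by simp
    then have "2 * \<bar>t\<bar> \<le> b ^ m"
      by (metis of_int_abs of_int_le_iff of_int_mult of_int_numeral)
    also have "\<dots> \<le> b ^ Suc m" using ab by simp
    finally have "2 * \<bar>t\<bar> \<le> b ^ Suc m" .
    then obtain v where "length v = d" "\<forall>x\<in>set v. \<bar>x\<bar> \<le> b" "phi a b d v = t"
      using phi_preimage_with_small_entries[OF ab \<open>gcd a b = 1\<close>] m by blast
    then show "t \<in> phi a b d ` ?A" using small_in_A by auto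
  qed
  then show "\<exists>S \<subseteq> ?A. bij_betw (phi a b d) S (Ival (real_of_int (b ^ (d - 1))))"
    by (rule exists_bij_betw_subset)
qed

end
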